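(* For every integer $n$ there is an isomorphism of $\mathcal{A}(\mathbb{CP}^1_q)$-bimodules $$\Phi_{(n)}:\ \mathcal{L}_n\otimes_{\mathcal{A}(\mathbb{CP}^1_q)}\Omega^{(0,1)}(\mathbb{CP}^1_q)\ \xrightarrow{\ \sim\ }\ \Omega^{(0,1)}(\mathbb{CP}^1_q)\otimes_{\mathcal{A}(\mathbb{CP}^1_q)}\mathcal{L}_n,$$ and likewise an isomorphism of $\mathcal{A}(\mathbb{CP}^1_q)$-bimodules $\mathcal{L}_n\otimes_{\mathcal{A}(\mathbb{CP}^1_q)}\Omega^{(1,0)}(\mathbb{CP}^1_q)\simeq\Omega^{(1,0)}(\mathbb{CP}^1_q)\otimes_{\mathcal{A}(\mathbb{CP}^1_q)}\mathcal{L}_n$.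
   Context: Fix $0<q<1$. Let $\mathcal{A}(SU_q(2))$ be the unital complex $*$-algebra generated by $a,c$ subject to $ac=qca$, $ac^*=qc^*a$, $cc^*=c^*c$, $a^*a+c^*c=aa^*+q^2cc^*=1$. Let $K$ be the algebra automorphism... more precisely, $U_q(su(2))$ (generated by $K^{\pm1},E,F$ with $KE=qEK$, $KF=q^{-1}FK$, $EF-FE=(K^2-K^{-2})/(q-q^{-1})$, $\Delta K=K\otimes K$) acts on $\mathcal{A}(SU_q(2))$ making it a left module algebra, with $K\triangleright a=q^{-1/2}a$, $K\triangleright c=q^{-1/2}c$, $K\triangleright a^*=q^{1/2}a^*$, $K\triangleright c^*=q^{1/2}c^*$ (so $K$ acts by an algebra automorphism). For $n\in\mathbb{Z}$ let $\mathcal{L}_n=\{x\in\mathcal{A}(SU_q(2)):K\triangleright x=q^{n/2}x\}$ and $\mathcal{A}(\mathbb{CP}^1_q):=\mathcal{L}_0$; each $\mathcal{L}_n$ is an $\mathcal{A}(\mathbb{CP}^1_q)$-bimodule. Let $\Omega^1(SU_q(2))$ be the $\mathcal{A}(SU_q(2))$-bimodule which is free as a left module with basis $\omega_+,\omega_-,\omega_z$, with right multiplication determined by $\omega_\pm x=q^kx\omega_\pm$ and $\omega_zx=q^{2k}x\omega_z$ for $x\in\mathcal{L}_k$. Define the $\mathcal{A}(\mathbb{CP}^1_q)$-sub-bimodules $\Omega^{(0,1)}(\mathbb{CP}^1_q):=\mathcal{L}_{-2}\,\omega_-$ and $\Omega^{(1,0)}(\mathbb{CP}^1_q):=\mathcal{L}_{2}\,\omega_+$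 of $\Omega^1(SU_q(2))$. *)

theory Defs
  imports "HOL-Analysis.Analysis" "HOL-Library.Poly_Mapping"
begin

datatype gen = Ga | Gas | Gc | Gcs

datatype word = Wd "gen list"

instantiation word :: monoid_add
begin
definition zero_word :: word where "zero_word = Wd []"
fun plus_word :: "word \<Rightarrow> word \<Rightarrow> word" where
  "plus_word (Wd u) (Wd v) = Wd (u @ v)"
instance
proof
  fix a b c :: word
  show "a + b + c = a + (b + c)" by (cases a; cases b; cases c) simp
  show "0 + a = a" by (cases a) (simp add: zero_word_def)
  show "a + 0 = a" by (cases a) (simp add: zero_word_def)
qed
end

text \<open>Free unital complex algebra: finitely supported functions on words,
  multiplication by concatenation of words (a ring_1).\<close>
type_synonym falg = "word \<Rightarrow>\<^sub>0 complex"

definition gn :: "gen \<Rightarrow> falg" where "gn g = Poly_Mapping.single (Wd [g]) 1"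
definition cst :: "complex \<Rightarrow> falg" where "cst c = Poly_Mapping.single 0 c"

definition suq_rels :: "real \<Rightarrow> falg set" where
  "suq_rels q =
    (let a = gn Ga; as = gn Gas; c = gn Gc; cs = gn Gcs; Q = cst (complex_of_real q) in
     { a * c - Q * c * a,
       a * cs - Q * cs * a,
       c * cs - cs * c,
       cs * as - Q * as * cs,
       c * as - Q * as * c,
       as * a + cs * c - 1,
       a * as + Q * Q * c * cs - 1 })"

inductive_set suq_ideal :: "real \<Rightarrow> falg set" for q :: real where
  rel: "r \<in> suq_rels q \<Longrightarrow> r \<in> suq_ideal q"
| zero: "0 \<in> suq_ideal q"
| add: "x \<in> suq_ideal q \<Longrightarrow> y \<in> suq_ideal q \<Longrightarrow> x + y \<in> suq_ideal q"
| mult: "x \<in> suq_ideal q \<Longrightarrow> u * x * v \<in> suq_ideal q"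

type_synonym aelt = "falg set"

definition cls :: "real \<Rightarrow> falg \<Rightarrow> aelt" where
  "cls q x = {y. y - x \<in> suq_ideal q}"

definition Asu :: "real \<Rightarrow> aelt set" where "Asu q = range (cls q)"

definition lift1 :: "real \<Rightarrow> (falg \<Rightarrow> falg) \<Rightarrow> aelt \<Rightarrow> aelt" where
  "lift1 q f X = (\<Union>x\<in>X. cls q (f x))"
definition lift2 :: "real \<Rightarrow> (falg \<Rightarrow> falg \<Rightarrow> falg) \<Rightarrow> aelt \<Rightarrow> aelt \<Rightarrow> aelt" where
  "lift2 q f X Y = (\<Union>x\<in>X. \<Union>y\<in>Y. cls q (f x y))"

definition addA :: "real \<Rightarrow> aelt \<Rightarrow> aelt \<Rightarrow> aelt" where "addA q = lift2 q (+)"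
definition mulA :: "real \<Rightarrow> aelt \<Rightarrow> aelt \<Rightarrow> aelt" where "mulA q = lift2 q (*)"
definition smulA :: "real \<Rightarrow> complex \<Rightarrow> aelt \<Rightarrow> aelt" where
  "smulA q c = lift1 q (\<lambda>x. cst c * x)"
definition zeroA :: "real \<Rightarrow> aelt" where "zeroA q = cls q 0"

text \<open>Weight of a word: K acts on a, c by q^(-1/2) and on a^*, c^* by q^(1/2);
  K is an algebra automorphism, so it acts on a word of weight d by q^(d/2).\<close>
fun gwt :: "gen \<Rightarrow> int" where
  "gwt Ga = -1" | "gwt Gc = -1" | "gwt Gas = 1" | "gwt Gcs = 1"
fun wwt :: "word \<Rightarrow> int" where "wwt (Wd w) = sum_list (map gwt w)"

definition Kf :: "real \<Rightarrow> falg \<Rightarrow> falg" where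
  "Kf q x = Poly_Mapping.mapp (\<lambda>w c. complex_of_real (q powr (real_of_int (wwt w) / 2)) * c) x"

definition KA :: "real \<Rightarrow> aelt \<Rightarrow> aelt" where "KA q = lift1 q (Kf q)"

definition Ln :: "real \<Rightarrow> int \<Rightarrow> aelt set" where
  "Ln q n = {X \<in> Asu q. KA q X = smulA q (complex_of_real (q powr (real_of_int n / 2))) X}"

definition CP1 :: "real \<Rightarrow> aelt set" where "CP1 q = Ln q 0"

record ('m, 'r) bimod =
  carr :: "'m set"
  badd :: "'m \<Rightarrow> 'm \<Rightarrow> 'm"
  lact :: "'r \<Rightarrow> 'm \<Rightarrow> 'm"
  ract :: "'m \<Rightarrow> 'r \<Rightarrow> 'm"

definition Lmod :: "real \<Rightarrow> int \<Rightarrow> (aelt, aelt) bimod" where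
  "Lmod q n = \<lparr> carr = Ln q n, badd = addA q, lact = mulA q, ract = mulA q \<rparr>"

text \<open>Omega^1(SU_q(2)): free left module with basis omega_+, omega_-, omega_z; an element
  x_+ omega_+ + x_- omega_- + x_z omega_z is the triple (x_+, x_-, x_z).
  Right multiplication by y in L_k: omega_+- y = q^k y omega_+-, omega_z y = q^(2k) y omega_z.\<close>
type_synonym oelt = "aelt \<times> aelt \<times> aelt"

definition om_add :: "real \<Rightarrow> oelt \<Rightarrow> oelt \<Rightarrow> oelt" where
  "om_add q u v = (case u of (x1, x2, x3) \<Rightarrow> case v of (y1, y2, y3) \<Rightarrow>
      (addA q x1 y1, addA q x2 y2, addA q x3 y3))"
definition om_lact :: "real \<Rightarrow> aelt \<Rightarrow> oelt \<Rightarrow> oelt" where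
  "om_lact q b u = (case u of (x1, x2, x3) \<Rightarrow> (mulA q b x1, mulA q b x2, mulA q b x3))"
definition om_ract_hom :: "real \<Rightarrow> int \<Rightarrow> oelt \<Rightarrow> aelt \<Rightarrow> oelt" where
  "om_ract_hom q k u y = (case u of (x1, x2, x3) \<Rightarrow>
      (smulA q (complex_of_real (q powr real_of_int k)) (mulA q x1 y),
       smulA q (complex_of_real (q powr real_of_int k)) (mulA q x2 y),
       smulA q (complex_of_real (q powr real_of_int (2 * k))) (mulA q x3 y)))"

text \<open>Right action of A(CP^1_q) = L_0 (degree k = 0).\<close>
definition Om01 :: "real \<Rightarrow> (oelt, aelt) bimod" where
  "Om01 q = \<lparr> carr = {(zeroA q, x, zeroA q) | x. x \<in> Ln q (-2)},
              badd = om_add q, lact = om_lact q, ract = (\<lambda>u b. om_ract_hom q 0 u b) \<rparr>"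
definition Om10 :: "real \<Rightarrow> (oelt, aelt) bimod" where
  "Om10 q = \<lparr> carr = {(x, zeroA q, zeroA q) | x. x \<in> Ln q 2},
              badd = om_add q, lact = om_lact q, ract = (\<lambda>u b. om_ract_hom q 0 u b) \<rparr>"

inductive_set trel :: "'r set \<Rightarrow> ('m, 'r) bimod \<Rightarrow> ('n, 'r) bimod \<Rightarrow> ('m \<times> 'n \<Rightarrow>\<^sub>0 int) set"
  for B M N where
  addl: "m \<in> carr M \<Longrightarrow> m' \<in> carr M \<Longrightarrow> n \<in> carr N \<Longrightarrow>
     Poly_Mapping.single (badd M m m', n) 1 - Poly_Mapping.single (m, n) 1
       - Poly_Mapping.single (m', n) 1 \<in> trel B M N"
| addr: "m \<in> carr M \<Longrightarrow> n \<in> carr N \<Longrightarrow> n' \<in> carr N \<Longrightarrow>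
     Poly_Mapping.single (m, badd N n n') 1 - Poly_Mapping.single (m, n) 1
       - Poly_Mapping.single (m, n') 1 \<in> trel B M N"
| bal: "m \<in> carr M \<Longrightarrow> b \<in> B \<Longrightarrow> n \<in> carr N \<Longrightarrow>
     Poly_Mapping.single (ract M m b, n) 1 - Poly_Mapping.single (m, lact N b n) 1 \<in> trel B M N"
| zero: "0 \<in> trel B M N"
| add: "x \<in> trel B M N \<Longrightarrow> y \<in> trel B M N \<Longrightarrow> x + y \<in> trel B M N"
| neg: "x \<in> trel B M N \<Longrightarrow> - x \<in> trel B M N"

definition tfree :: "('m, 'r) bimod \<Rightarrow> ('n, 'r) bimod \<Rightarrow> ('m \<times> 'n \<Rightarrow>\<^sub>0 int) set" where
  "tfree M N = {x. Poly_Mapping.keys x \<subseteq> carr M \<times> carr N}"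

definition tcls :: "'r set \<Rightarrow> ('m, 'r) bimod \<Rightarrow> ('n, 'r) bimod \<Rightarrow> ('m \<times> 'n \<Rightarrow>\<^sub>0 int)
    \<Rightarrow> ('m \<times> 'n \<Rightarrow>\<^sub>0 int) set" where
  "tcls B M N x = {y \<in> tfree M N. y - x \<in> trel B M N}"

definition push :: "('a \<Rightarrow> 'b) \<Rightarrow> ('a \<Rightarrow>\<^sub>0 int) \<Rightarrow> ('b \<Rightarrow>\<^sub>0 int)" where
  "push f x = (\<Sum>p\<in>Poly_Mapping.keys x. Poly_Mapping.single (f p) (Poly_Mapping.lookup x p))"

definition tensor :: "'r set \<Rightarrow> ('m, 'r) bimod \<Rightarrow> ('n, 'r) bimod
    \<Rightarrow> (('m \<times> 'n \<Rightarrow>\<^sub>0 int) set, 'r) bimod" where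
  "tensor B M N = \<lparr>
     carr = tcls B M N ` tfree M N,
     badd = (\<lambda>X Y. \<Union>x\<in>X. \<Union>y\<in>Y. tcls B M N (x + y)),
     lact = (\<lambda>b X. \<Union>x\<in>X. tcls B M N (push (\<lambda>(m, n). (lact M b m, n)) x)),
     ract = (\<lambda>X b. \<Union>x\<in>X. tcls B M N (push (\<lambda>(m, n). (m, ract N n b)) x)) \<rparr>"

definition bimod_iso :: "'r set \<Rightarrow> ('m, 'r) bimod \<Rightarrow> ('n, 'r) bimod \<Rightarrow> ('m \<Rightarrow> 'n) \<Rightarrow> bool" where
  "bimod_iso B M N \<Phi> \<longleftrightarrow>
     bij_betw \<Phi> (carr M) (carr N) \<and>
     (\<forall>x\<in>carr M. \<forall>y\<in>carr M. \<Phi> (badd M x y) = badd N (\<Phi> x) (\<Phi> y)) \<and>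
     (\<forall>b\<in>B. \<forall>x\<in>carr M. \<Phi> (lact M b x) = lact N b (\<Phi> x)) \<and>
     (\<forall>b\<in>B. \<forall>x\<in>carr M. \<Phi> (ract M x b) = ract N (\<Phi> x) b)"

end

theory Submission
  imports Defs
begin

text \<open>
  The algebra \<open>\<A>(SU\<^sub>q(2))\<close> is strongly graded by the eigenvalues of \<open>K\<close>: the relations
  \<open>a a\<^sup>* + q\<^sup>2 c c\<^sup>* = 1\<close> and \<open>a\<^sup>* a + c\<^sup>* c = 1\<close> write \<open>1\<close> as \<open>\<Sum>\<^sub>i u\<^sub>i v\<^sub>i\<close> with
  \<open>u\<^sub>i \<in> \<L>\<^sub>-\<^sub>1\<close>, \<open>v\<^sub>i \<in> \<L>\<^sub>1\<close> (resp. \<open>\<L>\<^sub>1\<close>, \<open>\<L>\<^sub>-\<^sub>1\<close>), and multiplying such decompositions gives one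
  with \<open>u\<^sub>i \<in> \<L>\<^sub>-\<^sub>l\<close>, \<open>v\<^sub>i \<in> \<L>\<^sub>l\<close> for every \<open>l\<close>. Hence multiplication
  \<open>\<L>\<^sub>k \<otimes> \<L>\<^sub>l \<rightarrow> \<L>\<^sub>k\<^sub>+\<^sub>l\<close> is an isomorphism of \<open>\<A>(\<C>\<P>\<^sup>1\<^sub>q)\<close>-bimodules, with inverse
  \<open>z \<mapsto> \<Sum>\<^sub>i z u\<^sub>i \<otimes> v\<^sub>i\<close>. Since \<open>\<omega>\<^sub>\<plusminus>\<close> commutes with \<open>\<A>(\<C>\<P>\<^sup>1\<^sub>q) = \<L>\<^sub>0\<close>, we have
  \<open>\<Omega>\<^sup>(\<^sup>0\<^sup>,\<^sup>1\<^sup>) \<cong> \<L>\<^sub>-\<^sub>2\<close> and \<open>\<Omega>\<^sup>(\<^sup>1\<^sup>,\<^sup>0\<^sup>) \<cong> \<L>\<^sub>2\<close>, so both sides of each claimed isomorphism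
  are isomorphic to \<open>\<L>\<^sub>n\<^sub>\<mp>\<^sub>2\<close>.
\<close>

lemma poly_mapping_single_add_induct:
  fixes P :: "('a \<Rightarrow>\<^sub>0 'b::comm_monoid_add) \<Rightarrow> bool"
  assumes "P 0" "\<And>k c x. P x \<Longrightarrow> P (Poly_Mapping.single k c + x)"
  shows "P x"
proof (induction x rule: Poly_Mapping.update_induct)
  case const then show ?case using assms by simp
next
  case (update f k v)
  have "Poly_Mapping.update k v f = Poly_Mapping.single k v + f"
    using update(1)
    by (intro poly_mapping_eqI) (auto simp: lookup_update lookup_add lookup_single when_def in_keys_iff)
  then show ?case using assms(2)[OF update(3)] by simp
qed

lemma push_eq_frag_extend: "push f x = frag_extend (frag_of \<circ> f) x"
proof -
  have *: "frag_cmul c (frag_of k) = Poly_Mapping.single k c" for c k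
    by (rule poly_mapping_eqI) (simp add: lookup_single when_def)
  show ?thesis by (simp add: push_def frag_extend_def *)
qed

lemma push_add: "push f (x + y) = push f x + push f y"
  by (simp add: push_eq_frag_extend frag_extend_add)
lemma push_diff: "push f (x - y) = push f x - push f y"
  by (simp add: push_eq_frag_extend frag_extend_diff)
lemma push_uminus: "push f (- x) = - push f x"
  by (simp add: push_eq_frag_extend frag_extend_minus)
lemma push_frag_of [simp]: "push f (frag_of p) = frag_of (f p)"
  by (simp add: push_eq_frag_extend)
lemma push_zero [simp]: "push f 0 = 0"
  by (simp add: push_def)
lemma keys_push: "Poly_Mapping.keys (push f x) \<subseteq> f ` Poly_Mapping.keys x"
  using keys_frag_extend[of "frag_of \<circ> f" x] by (auto simp: push_eq_frag_extend)

definition lin_ext :: "('p \<Rightarrow> 'a::ring_1) \<Rightarrow> ('p \<Rightarrow>\<^sub>0 int) \<Rightarrow> 'a" where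
  "lin_ext g x = (\<Sum>i\<in>Poly_Mapping.keys x. of_int (Poly_Mapping.lookup x i) * g i)"

lemma lin_ext_superset:
  "finite S \<Longrightarrow> Poly_Mapping.keys x \<subseteq> S \<Longrightarrow>
     lin_ext g x = (\<Sum>i\<in>S. of_int (Poly_Mapping.lookup x i) * g i)"
  unfolding lin_ext_def by (rule sum.mono_neutral_left) (auto simp: in_keys_iff)

lemma lin_ext_add: "lin_ext g (x + y) = lin_ext g x + lin_ext g y"
proof -
  let ?S = "Poly_Mapping.keys x \<union> Poly_Mapping.keys y"
  have "lin_ext g (x + y) = (\<Sum>i\<in>?S. of_int (Poly_Mapping.lookup (x + y) i) * g i)"
    using keys_add[of x y] by (intro lin_ext_superset) auto
  also have "\<dots> = (\<Sum>i\<in>?S. of_int (Poly_Mapping.lookup x i) * g i)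
                 + (\<Sum>i\<in>?S. of_int (Poly_Mapping.lookup y i) * g i)"
    by (simp add: lookup_add distrib_right sum.distrib)
  also have "\<dots> = lin_ext g x + lin_ext g y"
    by (subst (1 2) lin_ext_superset[of ?S]) auto
  finally show ?thesis .
qed

lemma lin_ext_zero [simp]: "lin_ext g 0 = 0"
  by (simp add: lin_ext_def)
lemma lin_ext_uminus: "lin_ext g (- x) = - lin_ext g x"
  by (metis add_eq_0_iff lin_ext_add lin_ext_zero)
lemma lin_ext_diff: "lin_ext g (x - y) = lin_ext g x - lin_ext g y"
  by (metis diff_conv_add_uminus lin_ext_add lin_ext_uminus)
lemma lin_ext_frag_of [simp]: "lin_ext g (frag_of p) = g p"
  by (simp add: lin_ext_def)
lemma lin_ext_push: "lin_ext g (push f x) = lin_ext (g \<circ> f) x"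
  by (induction x rule: frag_induction[OF subset_UNIV]) (simp_all add: push_diff lin_ext_diff)
lemma lin_ext_sum_list: "lin_ext g (sum_list (map f xs)) = sum_list (map (\<lambda>p. lin_ext g (f p)) xs)"
  by (induction xs) (simp_all add: lin_ext_add)
lemma mult_lin_ext: "r * lin_ext g x = lin_ext (\<lambda>p. r * g p) x"
  unfolding lin_ext_def sum_distrib_left
  by (rule sum.cong) (simp_all add: mult.assoc[symmetric] mult_of_int_commute[of _ r, symmetric])
lemma lin_ext_mult: "lin_ext g x * r = lin_ext (\<lambda>p. g p * r) x"
  by (simp add: lin_ext_def sum_distrib_right mult.assoc)
lemma lin_ext_diff_fun: "lin_ext g x - lin_ext h x = lin_ext (\<lambda>p. g p - h p) x"
  by (simp add: lin_ext_def sum_subtractf right_diff_distrib)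

lemma keys_sum_list:
  "Poly_Mapping.keys (sum_list (map f xs)) \<subseteq> (\<Union>x\<in>set xs. Poly_Mapping.keys (f x))"
proof (induction xs)
  case (Cons a xs) then show ?case using keys_add[of "f a" "sum_list (map f xs)"] by auto
qed simp

definition bimod_closed :: "'r set \<Rightarrow> ('m, 'r) bimod \<Rightarrow> bool" where
  "bimod_closed B M \<longleftrightarrow>
     (\<forall>x\<in>carr M. \<forall>y\<in>carr M. badd M x y \<in> carr M) \<and>
     (\<forall>b\<in>B. \<forall>x\<in>carr M. lact M b x \<in> carr M \<and> ract M x b \<in> carr M)"

text \<open>Only the bimodule axioms needed to make the actions on a tensor product well defined.\<close>
definition bimod_laws :: "'r set \<Rightarrow> ('m, 'r) bimod \<Rightarrow> bool" where
  "bimod_laws B M \<longleftrightarrow> bimod_closed B M \<and>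
     (\<forall>b\<in>B. \<forall>x\<in>carr M. \<forall>y\<in>carr M.
        lact M b (badd M x y) = badd M (lact M b x) (lact M b y) \<and>
        ract M (badd M x y) b = badd M (ract M x b) (ract M y b)) \<and>
     (\<forall>b\<in>B. \<forall>b'\<in>B. \<forall>x\<in>carr M. lact M b (ract M x b') = ract M (lact M b x) b')"

lemma bimod_closedD:
  assumes "bimod_closed B M"
  shows "x \<in> carr M \<Longrightarrow> y \<in> carr M \<Longrightarrow> badd M x y \<in> carr M"
    and "b \<in> B \<Longrightarrow> x \<in> carr M \<Longrightarrow> lact M b x \<in> carr M"
    and "b \<in> B \<Longrightarrow> x \<in> carr M \<Longrightarrow> ract M x b \<in> carr M"
  using assms by (auto simp: bimod_closed_def)

lemma bimod_isoD:
  assumes "bimod_iso B M N f"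
  shows "bij_betw f (carr M) (carr N)"
    and "x \<in> carr M \<Longrightarrow> y \<in> carr M \<Longrightarrow> f (badd M x y) = badd N (f x) (f y)"
    and "b \<in> B \<Longrightarrow> x \<in> carr M \<Longrightarrow> f (lact M b x) = lact N b (f x)"
    and "b \<in> B \<Longrightarrow> x \<in> carr M \<Longrightarrow> f (ract M x b) = ract N (f x) b"
  using assms by (auto simp: bimod_iso_def)

lemma bimod_iso_comp:
  assumes f: "bimod_iso B M N f" and g: "bimod_iso B N P g"
  shows "bimod_iso B M P (g \<circ> f)"
proof -
  have "f x \<in> carr N" if "x \<in> carr M" for x
    using bij_betw_apply[OF bimod_isoD(1)[OF f] that] .
  then show ?thesis
    using bij_betw_trans[OF bimod_isoD(1)[OF f] bimod_isoD(1)[OF g]]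
    by (auto simp: bimod_iso_def bimod_isoD(2-4)[OF f] bimod_isoD(2-4)[OF g])
qed

lemma bimod_iso_inv_into:
  assumes f: "bimod_iso B M N f" and cl: "bimod_closed B M"
  shows "bimod_iso B N M (inv_into (carr M) f)"
proof -
  let ?g = "inv_into (carr M) f"
  have bij: "bij_betw f (carr M) (carr N)" by (rule bimod_isoD(1)[OF f])
  have g_in: "?g x \<in> carr M" and f_g: "f (?g x) = x" if "x \<in> carr N" for x
    using that bij by (auto simp: bij_betw_def inv_into_into f_inv_into_f)
  have g_f: "?g (f x) = x" if "x \<in> carr M" for x
    using that bij by (simp add: bij_betw_def inv_into_f_f)
  show ?thesis unfolding bimod_iso_def
  proof (intro conjI ballI)
    show "bij_betw ?g (carr N) (carr M)" using bij by (rule bij_betw_inv_into)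
  next
    fix x y assume "x \<in> carr N" "y \<in> carr N"
    then show "?g (badd N x y) = badd M (?g x) (?g y)"
      by (metis bimod_closedD(1)[OF cl] bimod_isoD(2)[OF f] f_g g_f g_in)
  next
    fix b x assume "b \<in> B" "x \<in> carr N"
    then show "?g (lact N b x) = lact M b (?g x)"
      by (metis bimod_closedD(2)[OF cl] bimod_isoD(3)[OF f] f_g g_f g_in)
  next
    fix b x assume "b \<in> B" "x \<in> carr N"
    then show "?g (ract N x b) = ract M (?g x) b"
      by (metis bimod_closedD(3)[OF cl] bimod_isoD(4)[OF f] f_g g_f g_in)
  qed
qed

lemma bimod_laws_iso:
  assumes e: "bimod_iso B M P e" and cl: "bimod_closed B M" and P: "bimod_laws B P"
  shows "bimod_laws B M"
proof -
  have inj: "inj_on e (carr M)" and e_in: "\<And>x. x \<in> carr M \<Longrightarrow> e x \<in> carr P"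
    using bimod_isoD(1)[OF e] by (auto simp: bij_betw_def)
  note hom = bimod_isoD(2-4)[OF e] and clM = bimod_closedD[OF cl]
  show ?thesis
    using P unfolding bimod_laws_def
    by (simp add: cl) (auto intro!: inj_onD[OF inj] simp: hom clM e_in)
qed

lemma trel_diff: "x \<in> trel B M N \<Longrightarrow> y \<in> trel B M N \<Longrightarrow> x - y \<in> trel B M N"
  by (metis diff_conv_add_uminus trel.add trel.neg)

lemma trel_sum_list:
  "(\<And>p. p \<in> set xs \<Longrightarrow> f p \<in> trel B M N) \<Longrightarrow> sum_list (map f xs) \<in> trel B M N"
  by (induction xs) (auto intro: trel.zero trel.add)

lemma frag_of_trel_idem_left:
  assumes "m \<in> carr M" "badd M m m = m" "n \<in> carr N"
  shows "frag_of (m, n) \<in> trel B M N"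
  using trel.neg[OF trel.addl[OF assms(1,1,3), of B]] assms(2) by simp

lemma frag_of_trel_idem_right:
  assumes "m \<in> carr M" "n \<in> carr N" "badd N n n = n"
  shows "frag_of (m, n) \<in> trel B M N"
  using trel.neg[OF trel.addr[OF assms(1,2,2), of B]] assms(3) by simp

lemma tfree_add: "x \<in> tfree M N \<Longrightarrow> y \<in> tfree M N \<Longrightarrow> x + y \<in> tfree M N"
  using keys_add[of x y] by (auto simp: tfree_def)
lemma tfree_diff: "x \<in> tfree M N \<Longrightarrow> y \<in> tfree M N \<Longrightarrow> x - y \<in> tfree M N"
  using keys_diff[of x y] by (auto simp: tfree_def)

lemma push_tfree:
  assumes "f ` (carr M \<times> carr N) \<subseteq> carr M \<times> carr N" "x \<in> tfree M N"
  shows "push f x \<in> tfree M N"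
proof -
  have "f ` Poly_Mapping.keys x \<subseteq> carr M \<times> carr N"
    using assms by (auto simp: tfree_def)
  then show ?thesis using keys_push[of f x] by (simp add: tfree_def)
qed

lemma tcls_self: "x \<in> tfree M N \<Longrightarrow> x \<in> tcls B M N x"
  by (simp add: tcls_def trel.zero)

lemma tcls_eqI:
  assumes "x - y \<in> trel B M N"
  shows "tcls B M N x = tcls B M N y"
proof -
  have "z - y \<in> trel B M N \<longleftrightarrow> z - x \<in> trel B M N" for z
    using trel.add[of "z - x" B M N "x - y"] trel_diff[of "z - y" B M N "x - y"] assms by auto
  then show ?thesis by (simp add: tcls_def)
qed

lemma carr_tensor: "carr (tensor B M N) = tcls B M N ` tfree M N"
  by (simp add: tensor_def)

lemma UN_tcls_eq:
  assumes "x \<in> tfree M N" "\<And>x'. x' - x \<in> trel B M N \<Longrightarrow> F x' - F x \<in> trel B M N"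
  shows "(\<Union>x'\<in>tcls B M N x. tcls B M N (F x')) = tcls B M N (F x)"
proof -
  have "tcls B M N (F x') = tcls B M N (F x)" if "x' \<in> tcls B M N x" for x'
    using that assms(2) by (intro tcls_eqI) (simp add: tcls_def)
  then show ?thesis using tcls_self[OF assms(1)] by blast
qed

lemma badd_tensor:
  assumes "x \<in> tfree M N" "y \<in> tfree M N"
  shows "badd (tensor B M N) (tcls B M N x) (tcls B M N y) = tcls B M N (x + y)"
proof -
  have "(\<Union>y'\<in>tcls B M N y. tcls B M N (x' + y')) = tcls B M N (x' + y)" if "x' \<in> tfree M N" for x'
    by (rule UN_tcls_eq[OF assms(2)]) (simp add: that)
  then have "badd (tensor B M N) (tcls B M N x) (tcls B M N y) = (\<Union>x'\<in>tcls B M N x. tcls B M N (x' + y))"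
    by (simp add: tensor_def tcls_def)
  also have "\<dots> = tcls B M N (x + y)"
    by (rule UN_tcls_eq[OF assms(1)]) (simp add: algebra_simps)
  finally show ?thesis .
qed

lemma push_lact_trel:
  assumes M: "bimod_laws B M" and b: "b \<in> B" and x: "x \<in> trel B M N"
  shows "push (\<lambda>(m, n). (lact M b m, n)) x \<in> trel B M N"
  using x
proof (induction rule: trel.induct)
  case (addl m m' n)
  then show ?case
    using M b by (simp add: push_diff trel.addl bimod_laws_def bimod_closed_def)
next
  case (addr m n n')
  then show ?case
    using M b by (simp add: push_diff trel.addr bimod_laws_def bimod_closed_def)
next
  case (bal m b' n)
  then show ?case
    using M b by (simp add: push_diff trel.bal bimod_laws_def bimod_closed_def)
qed (simp_all add: push_add push_uminus trel.zero trel.add trel.neg)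

lemma push_ract_trel:
  assumes N: "bimod_laws B N" and b: "b \<in> B" and x: "x \<in> trel B M N"
  shows "push (\<lambda>(m, n). (m, ract N n b)) x \<in> trel B M N"
  using x
proof (induction rule: trel.induct)
  case (addl m m' n)
  then show ?case
    using N b by (simp add: push_diff trel.addl bimod_laws_def bimod_closed_def)
next
  case (addr m n n')
  then show ?case
    using N b by (simp add: push_diff trel.addr bimod_laws_def bimod_closed_def)
next
  case (bal m b' n)
  then have "ract N (lact N b' n) b = lact N b' (ract N n b)" "ract N n b \<in> carr N"
    using N b by (auto simp: bimod_laws_def bimod_closed_def)
  then show ?case
    using bal by (simp add: push_diff trel.bal)
qed (simp_all add: push_add push_uminus trel.zero trel.add trel.neg)

lemma lact_tensor:
  assumes "bimod_laws B M" "b \<in> B" "x \<in> tfree M N"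
  shows "lact (tensor B M N) b (tcls B M N x) = tcls B M N (push (\<lambda>(m, n). (lact M b m, n)) x)"
  unfolding tensor_def bimod.simps
  by (rule UN_tcls_eq[OF assms(3)]) (metis assms(1,2) push_diff push_lact_trel)

lemma ract_tensor:
  assumes "bimod_laws B N" "b \<in> B" "x \<in> tfree M N"
  shows "ract (tensor B M N) (tcls B M N x) b = tcls B M N (push (\<lambda>(m, n). (m, ract N n b)) x)"
  unfolding tensor_def bimod.simps
  by (rule UN_tcls_eq[OF assms(3)]) (metis assms(1,2) push_diff push_ract_trel)

lemma push_lact_tfree:
  "bimod_closed B M \<Longrightarrow> b \<in> B \<Longrightarrow> x \<in> tfree M N \<Longrightarrow>
     push (\<lambda>(m, n). (lact M b m, n)) x \<in> tfree M N"
  by (rule push_tfree) (auto simp: bimod_closed_def)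

lemma push_ract_tfree:
  "bimod_closed B N \<Longrightarrow> b \<in> B \<Longrightarrow> x \<in> tfree M N \<Longrightarrow>
     push (\<lambda>(m, n). (m, ract N n b)) x \<in> tfree M N"
  by (rule push_tfree) (auto simp: bimod_closed_def)

lemma bimod_closed_tensor:
  assumes M: "bimod_laws B M" and N: "bimod_laws B N"
  shows "bimod_closed B (tensor B M N)"
proof -
  have "badd (tensor B M N) X Y \<in> carr (tensor B M N)"
    if "X \<in> carr (tensor B M N)" "Y \<in> carr (tensor B M N)" for X Y
    using that by (auto simp: carr_tensor badd_tensor tfree_add)
  moreover have "lact (tensor B M N) b X \<in> carr (tensor B M N)"
    "ract (tensor B M N) X b \<in> carr (tensor B M N)"
    if b: "b \<in> B" and X: "X \<in> carr (tensor B M N)" for b X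
  proof -
    obtain x where x: "x \<in> tfree M N" "X = tcls B M N x"
      using X by (auto simp: carr_tensor)
    have "bimod_closed B M" "bimod_closed B N"
      using M N by (simp_all add: bimod_laws_def)
    note push_in = push_lact_tfree[OF this(1) b x(1)] push_ract_tfree[OF this(2) b x(1)]
    show "lact (tensor B M N) b X \<in> carr (tensor B M N)"
      unfolding x lact_tensor[OF M b x(1)] carr_tensor by (rule imageI[OF push_in(1)])
    show "ract (tensor B M N) X b \<in> carr (tensor B M N)"
      unfolding x ract_tensor[OF N b x(1)] carr_tensor by (rule imageI[OF push_in(2)])
  qed
  ultimately show ?thesis by (simp add: bimod_closed_def)
qed

lemma suq_ideal_uminus: "x \<in> suq_ideal q \<Longrightarrow> - x \<in> suq_ideal q"
  using suq_ideal.mult[of x q "-1" 1] by simp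
lemma suq_ideal_diff: "x \<in> suq_ideal q \<Longrightarrow> y \<in> suq_ideal q \<Longrightarrow> x - y \<in> suq_ideal q"
  by (metis diff_conv_add_uminus suq_ideal.add suq_ideal_uminus)
lemma suq_ideal_mult_left: "x \<in> suq_ideal q \<Longrightarrow> u * x \<in> suq_ideal q"
  using suq_ideal.mult[of x q u 1] by simp
lemma suq_ideal_mult_right: "x \<in> suq_ideal q \<Longrightarrow> x * u \<in> suq_ideal q"
  using suq_ideal.mult[of x q 1 u] by simp
lemma suq_ideal_trans:
  "x - y \<in> suq_ideal q \<Longrightarrow> y - z \<in> suq_ideal q \<Longrightarrow> x - z \<in> suq_ideal q"
  using suq_ideal.add[of "x - y" q "y - z"] by simp
lemma suq_ideal_sum: "(\<And>i. i \<in> A \<Longrightarrow> f i \<in> suq_ideal q) \<Longrightarrow> sum f A \<in> suq_ideal q"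
  by (induction A rule: infinite_finite_induct) (auto intro: suq_ideal.zero suq_ideal.add)
lemma suq_ideal_sum_list:
  "(\<And>p. p \<in> set xs \<Longrightarrow> f p \<in> suq_ideal q) \<Longrightarrow> sum_list (map f xs) \<in> suq_ideal q"
  by (induction xs) (auto intro: suq_ideal.zero suq_ideal.add)

lemma lin_ext_suq_ideal:
  "(\<And>p. p \<in> Poly_Mapping.keys x \<Longrightarrow> g p \<in> suq_ideal q) \<Longrightarrow> lin_ext g x \<in> suq_ideal q"
  unfolding lin_ext_def by (intro suq_ideal_sum suq_ideal_mult_left)

lemma mem_cls_iff: "y \<in> cls q x \<longleftrightarrow> y - x \<in> suq_ideal q"
  by (simp add: cls_def)

lemma cls_eq_iff: "cls q x = cls q y \<longleftrightarrow> x - y \<in> suq_ideal q"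
proof
  assume "cls q x = cls q y"
  moreover have "x \<in> cls q x" by (simp add: cls_def suq_ideal.zero)
  ultimately show "x - y \<in> suq_ideal q" by (auto simp: cls_def)
next
  assume "x - y \<in> suq_ideal q"
  then have "z - y \<in> suq_ideal q \<longleftrightarrow> z - x \<in> suq_ideal q" for z
    using suq_ideal_trans[of z x q y] suq_ideal_diff[of "z - y" q "x - y"] by auto
  then show "cls q x = cls q y" by (simp add: cls_def)
qed

lemma lift1_cls:
  assumes "\<And>x'. x' - x \<in> suq_ideal q \<Longrightarrow> f x' - f x \<in> suq_ideal q"
  shows "lift1 q f (cls q x) = cls q (f x)"
proof -
  have "cls q (f x') = cls q (f x)" if "x' \<in> cls q x" for x'
    using that assms by (simp add: mem_cls_iff cls_eq_iff)
  moreover have "x \<in> cls q x" by (simp add: mem_cls_iff suq_ideal.zero)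
  ultimately show ?thesis unfolding lift1_def by blast
qed

lemma lift2_cls:
  assumes "\<And>x' y'. x' - x \<in> suq_ideal q \<Longrightarrow> y' - y \<in> suq_ideal q \<Longrightarrow>
    f x' y' - f x y \<in> suq_ideal q"
  shows "lift2 q f (cls q x) (cls q y) = cls q (f x y)"
proof -
  have "cls q (f x' y') = cls q (f x y)" if "x' \<in> cls q x" "y' \<in> cls q y" for x' y'
    using that assms by (simp add: mem_cls_iff cls_eq_iff)
  moreover have "x \<in> cls q x" "y \<in> cls q y" by (simp_all add: mem_cls_iff suq_ideal.zero)
  ultimately show ?thesis unfolding lift2_def by blast
qed

lemma addA_cls [simp]: "addA q (cls q x) (cls q y) = cls q (x + y)"
  unfolding addA_def by (rule lift2_cls) (metis add_diff_add suq_ideal.add)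

lemma mulA_cls [simp]: "mulA q (cls q x) (cls q y) = cls q (x * y)"
  unfolding mulA_def
proof (rule lift2_cls)
  fix x' y' assume "x' - x \<in> suq_ideal q" "y' - y \<in> suq_ideal q"
  then have "(x' - x) * y' + x * (y' - y) \<in> suq_ideal q"
    by (intro suq_ideal.add suq_ideal_mult_left suq_ideal_mult_right)
  then show "x' * y' - x * y \<in> suq_ideal q" by (simp add: algebra_simps)
qed

lemma smulA_cls [simp]: "smulA q c (cls q x) = cls q (cst c * x)"
  unfolding smulA_def by (rule lift1_cls) (metis suq_ideal_mult_left right_diff_distrib)

lemma mulA_addA_distrib_left:
  "X \<in> Asu q \<Longrightarrow> Y \<in> Asu q \<Longrightarrow> Z \<in> Asu q \<Longrightarrow>
     mulA q Z (addA q X Y) = addA q (mulA q Z X) (mulA q Z Y)"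
  by (auto simp: Asu_def distrib_left)
lemma mulA_addA_distrib_right:
  "X \<in> Asu q \<Longrightarrow> Y \<in> Asu q \<Longrightarrow> Z \<in> Asu q \<Longrightarrow>
     mulA q (addA q X Y) Z = addA q (mulA q X Z) (mulA q Y Z)"
  by (auto simp: Asu_def distrib_right)
lemma mulA_assoc:
  "X \<in> Asu q \<Longrightarrow> Y \<in> Asu q \<Longrightarrow> Z \<in> Asu q \<Longrightarrow> mulA q (mulA q X Y) Z = mulA q X (mulA q Y Z)"
  by (auto simp: Asu_def mult.assoc)
lemma mulA_Asu: "X \<in> Asu q \<Longrightarrow> Y \<in> Asu q \<Longrightarrow> mulA q X Y \<in> Asu q"
  by (auto simp: Asu_def)
lemma smulA_one: "X \<in> Asu q \<Longrightarrow> smulA q 1 X = X"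
  by (auto simp: Asu_def cst_def)

lemma cst_mult: "cst (a * b) = cst a * cst b"
  by (simp add: cst_def mult_single)
lemma cst_add: "cst (a + b) = cst a + cst b"
  by (simp add: cst_def single_add)
lemma cst_one [simp]: "cst 1 = 1"
  by (simp add: cst_def)
lemma of_int_eq_cst: "(of_int n :: falg) = cst (of_int n)"
proof (induction n rule: int_induct[where k = 0])
  case base then show ?case by (simp add: cst_def)
next
  case (step1 i) then show ?case by (simp add: cst_add)
next
  case (step2 i) then show ?case by (simp add: cst_def single_diff)
qed

lemma cst_mult_commute: "cst a * x = x * cst a"
proof (induction x rule: poly_mapping_single_add_induct)
  case (2 k c x)
  have "cst a * Poly_Mapping.single k c = Poly_Mapping.single k c * cst a"
    by (simp add: cst_def mult_single mult.commute)
  with 2 show ?case by (simp add: distrib_left distrib_right)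
qed simp

lemma lookup_cst_mult: "Poly_Mapping.lookup (cst c * x) w = c * Poly_Mapping.lookup x w"
  by (induction x rule: poly_mapping_single_add_induct)
     (simp_all add: cst_def distrib_left mult_single lookup_add lookup_single when_def)

definition rep :: "real \<Rightarrow> aelt \<Rightarrow> falg" where
  "rep q X = (SOME x. X = cls q x)"

definition homogeneous :: "int \<Rightarrow> falg \<Rightarrow> bool" where
  "homogeneous d x \<longleftrightarrow> (\<forall>w\<in>Poly_Mapping.keys x. wwt w = d)"

lemma homogeneous_add: "homogeneous d x \<Longrightarrow> homogeneous d y \<Longrightarrow> homogeneous d (x + y)"
  using keys_add[of x y] by (auto simp: homogeneous_def)
lemma homogeneous_diff: "homogeneous d x \<Longrightarrow> homogeneous d y \<Longrightarrow> homogeneous d (x - y)"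
  using keys_diff[of x y] by (auto simp: homogeneous_def)
lemma homogeneous_single: "wwt w = d \<Longrightarrow> homogeneous d (Poly_Mapping.single w c)"
  by (auto simp: homogeneous_def)

text \<open>Hence the ideal is stable under \<open>K\<close>, which therefore acts on the quotient.\<close>
lemma suq_rels_homogeneous: "r \<in> suq_rels q \<Longrightarrow> \<exists>d. homogeneous d r"
proof -
  have one: "(1::falg) = Poly_Mapping.single (Wd []) 1"
    by (simp add: zero_word_def[symmetric])
  show "r \<in> suq_rels q \<Longrightarrow> \<exists>d. homogeneous d r"
    unfolding suq_rels_def Let_def
    apply (simp add: gn_def cst_def mult_single)
    apply (elim disjE; simp only: one)
    apply (rule exI, (intro homogeneous_add homogeneous_diff homogeneous_single; simp))+
    done
qed

lemma wwt_plus: "wwt (u + v) = wwt u + wwt v"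
  by (cases u; cases v) simp
lemma wwt_zero [simp]: "wwt 0 = 0"
  by (simp add: zero_word_def)

locale suq =
  fixes q :: real
  assumes q_pos: "0 < q"
begin

definition qhalf :: "int \<Rightarrow> complex" where
  "qhalf k = complex_of_real (q powr (real_of_int k / 2))"

lemma qhalf_add: "qhalf (k + l) = qhalf k * qhalf l"
  using q_pos by (simp add: qhalf_def add_divide_distrib powr_add)
lemma qhalf_zero [simp]: "qhalf 0 = 1"
  using q_pos by (simp add: qhalf_def)

lemma lookup_Kf: "Poly_Mapping.lookup (Kf q x) w = qhalf (wwt w) * Poly_Mapping.lookup x w"
  by (auto simp: Kf_def lookup_mapp when_def qhalf_def in_keys_iff)

lemma Kf_add: "Kf q (x + y) = Kf q x + Kf q y"
  by (rule poly_mapping_eqI) (simp add: lookup_Kf lookup_add distrib_left)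
lemma Kf_diff: "Kf q (x - y) = Kf q x - Kf q y"
  by (rule poly_mapping_eqI) (simp add: lookup_Kf lookup_minus right_diff_distrib)
lemma Kf_zero [simp]: "Kf q 0 = 0"
  by (rule poly_mapping_eqI) (simp add: lookup_Kf)
lemma Kf_single: "Kf q (Poly_Mapping.single w c) = Poly_Mapping.single w (qhalf (wwt w) * c)"
  by (rule poly_mapping_eqI) (simp add: lookup_Kf lookup_single when_def)
lemma Kf_cst: "Kf q (cst c) = cst c"
  by (simp add: cst_def Kf_single)

lemma Kf_mult: "Kf q (x * y) = Kf q x * Kf q y"
proof (induction x rule: poly_mapping_single_add_induct)
  case (2 k c x)
  have "Kf q (Poly_Mapping.single k c * y) = Kf q (Poly_Mapping.single k c) * Kf q y"
    by (induction y rule: poly_mapping_single_add_induct)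
       (simp_all add: distrib_left Kf_add Kf_single mult_single wwt_plus qhalf_add mult_ac)
  with 2 show ?case by (simp add: distrib_right Kf_add)
qed simp

lemma homogeneous_Kf: "homogeneous d x \<Longrightarrow> Kf q x = cst (qhalf d) * x"
  by (rule poly_mapping_eqI) (auto simp: homogeneous_def lookup_Kf lookup_cst_mult in_keys_iff)

lemma Kf_suq_ideal: "x \<in> suq_ideal q \<Longrightarrow> Kf q x \<in> suq_ideal q"
proof (induction rule: suq_ideal.induct)
  case (rel r)
  then obtain d where "homogeneous d r" using suq_rels_homogeneous by blast
  then show ?case
    using suq_ideal_mult_left[OF suq_ideal.rel[OF rel]] by (simp add: homogeneous_Kf)
qed (simp_all add: Kf_add Kf_mult suq_ideal.zero suq_ideal.add suq_ideal.mult)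

lemma KA_cls: "KA q (cls q x) = cls q (Kf q x)"
  unfolding KA_def by (rule lift1_cls) (metis Kf_diff Kf_suq_ideal)

definition weight :: "int \<Rightarrow> falg \<Rightarrow> bool" where
  "weight k x \<longleftrightarrow> cls q (Kf q x) = cls q (cst (qhalf k) * x)"

lemma cls_in_Ln_iff: "cls q x \<in> Ln q k \<longleftrightarrow> weight k x"
  by (simp add: Ln_def Asu_def KA_cls weight_def qhalf_def)

lemma in_Ln_iff: "X \<in> Ln q k \<longleftrightarrow> (\<exists>x. X = cls q x \<and> weight k x)"
proof -
  have "X \<in> Ln q k \<Longrightarrow> \<exists>x. X = cls q x" by (auto simp: Ln_def Asu_def)
  then show ?thesis using cls_in_Ln_iff by blast
qed

lemma weight_add:
  assumes "weight k x" "weight k y"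
  shows "weight k (x + y)"
proof -
  have "(Kf q x - cst (qhalf k) * x) + (Kf q y - cst (qhalf k) * y) \<in> suq_ideal q"
    using assms unfolding weight_def cls_eq_iff by (rule suq_ideal.add)
  then show ?thesis by (simp add: weight_def cls_eq_iff Kf_add algebra_simps)
qed
lemma weight_zero: "weight k 0"
  by (simp add: weight_def)
lemma weight_diff:
  assumes "weight k x" "weight k y"
  shows "weight k (x - y)"
proof -
  have "(Kf q x - cst (qhalf k) * x) - (Kf q y - cst (qhalf k) * y) \<in> suq_ideal q"
    using assms unfolding weight_def cls_eq_iff by (rule suq_ideal_diff)
  then show ?thesis by (simp add: weight_def cls_eq_iff Kf_diff algebra_simps)
qed

lemma weight_mult: "weight k x \<Longrightarrow> weight l y \<Longrightarrow> weight (k + l) (x * y)"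
proof -
  assume "weight k x" "weight l y"
  then have "cls q (Kf q (x * y)) = cls q (cst (qhalf k) * x * (cst (qhalf l) * y))"
    by (metis Kf_mult mulA_cls weight_def)
  also have "cst (qhalf k) * x * (cst (qhalf l) * y) = cst (qhalf (k + l)) * (x * y)"
    by (simp add: qhalf_add cst_mult mult.assoc) (metis cst_mult_commute mult.assoc)
  finally show ?thesis by (simp add: weight_def)
qed

lemma weight_one: "weight 0 1"
  by (simp add: weight_def Kf_cst[of 1, simplified])
lemma weight_cst: "weight 0 (cst c)"
  by (simp add: weight_def Kf_cst)
lemma weight_cst_mult: "weight k x \<Longrightarrow> weight k (cst c * x)"
  using weight_mult[OF weight_cst] by (metis add_0)
lemma weight_of_int_mult: "weight k x \<Longrightarrow> weight k (of_int n * x)"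
  by (simp add: of_int_eq_cst weight_cst_mult)
lemma weight_gn: "weight (gwt g) (gn g)"
  by (simp add: weight_def gn_def Kf_single qhalf_def cst_def mult_single)
lemma weight_sum: "(\<And>i. i \<in> A \<Longrightarrow> weight k (f i)) \<Longrightarrow> weight k (sum f A)"
  by (induction A rule: infinite_finite_induct) (auto intro: weight_add weight_zero)
lemma weight_sum_list: "(\<And>x. x \<in> set xs \<Longrightarrow> weight k x) \<Longrightarrow> weight k (sum_list xs)"
  by (induction xs) (auto intro: weight_add weight_zero)

lemma rep_in_Ln:
  assumes "X \<in> Ln q k"
  shows "cls q (rep q X) = X" and "weight k (rep q X)"
proof -
  obtain x where "X = cls q x" using assms by (auto simp: in_Ln_iff)
  then show "cls q (rep q X) = X" unfolding rep_def by (metis (mono_tags) someI)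
  then show "weight k (rep q X)" using assms cls_in_Ln_iff by metis
qed

lemma rep_diff_suq_ideal: "X \<in> Ln q k \<Longrightarrow> cls q z = X \<Longrightarrow> rep q X - z \<in> suq_ideal q"
  using rep_in_Ln(1) cls_eq_iff by metis

lemma addA_Ln: "X \<in> Ln q k \<Longrightarrow> Y \<in> Ln q k \<Longrightarrow> addA q X Y \<in> Ln q k"
  by (metis addA_cls cls_in_Ln_iff in_Ln_iff weight_add)
lemma mulA_Ln: "X \<in> Ln q k \<Longrightarrow> Y \<in> Ln q l \<Longrightarrow> mulA q X Y \<in> Ln q (k + l)"
  by (metis mulA_cls cls_in_Ln_iff in_Ln_iff weight_mult)

lemma rep_addA_diff:
  assumes "X \<in> Ln q k" "Y \<in> Ln q k"
  shows "rep q (addA q X Y) - (rep q X + rep q Y) \<in> suq_ideal q"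
  using rep_diff_suq_ideal[OF addA_Ln[OF assms]] by (simp add: rep_in_Ln(1)[OF assms(1)]
      rep_in_Ln(1)[OF assms(2)] flip: addA_cls)

lemma rep_mulA_diff:
  assumes "X \<in> Ln q k" "Y \<in> Ln q j"
  shows "rep q (mulA q X Y) - rep q X * rep q Y \<in> suq_ideal q"
  using rep_diff_suq_ideal[OF mulA_Ln[OF assms]] by (simp add: rep_in_Ln(1)[OF assms(1)]
      rep_in_Ln(1)[OF assms(2)] flip: mulA_cls)

end

subsection \<open>Strong grading\<close>

definition sum_prods :: "(falg \<times> falg) list \<Rightarrow> falg" where
  "sum_prods ps = sum_list (map (\<lambda>(u, v). u * v) ps)"

lemma sum_prods_Cons [simp]: "sum_prods ((u, v) # ps) = u * v + sum_prods ps"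
  by (simp add: sum_prods_def)

lemma sum_prods_concat:
  "sum_prods (concat (map (\<lambda>(u, v). map (\<lambda>(u', v'). (u * u', v' * v)) rs) ps))
     = sum_list (map (\<lambda>(u, v). u * sum_prods rs * v) ps)"
proof (induction ps)
  case (Cons p ps)
  obtain u v where p: "p = (u, v)" by (cases p)
  have "sum_prods (map (\<lambda>(u', v'). (u * u', v' * v)) rs) = u * sum_prods rs * v"
    by (induction rs) (auto simp: sum_prods_def algebra_simps)
  then show ?case using Cons by (simp add: p sum_prods_def)
qed (simp add: sum_prods_def)

lemma sum_list_mult_sum_prods: "sum_list (map (\<lambda>(u, v). y * u * v) ps) = y * sum_prods ps"
  by (induction ps) (auto simp: sum_prods_def algebra_simps)

lemma sum_prods_suq_ideal_cong:
  "s - 1 \<in> suq_ideal q \<Longrightarrow> sum_list (map (\<lambda>(u, v). u * s * v) ps) - sum_prods ps \<in> suq_ideal q"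
proof (induction ps)
  case (Cons p ps)
  obtain u v where p: "p = (u, v)" by (cases p)
  have "u * (s - 1) * v + (sum_list (map (\<lambda>(u, v). u * s * v) ps) - sum_prods ps) \<in> suq_ideal q"
    using Cons by (intro suq_ideal.add suq_ideal_mult_left suq_ideal_mult_right)
  then show ?case by (simp add: p algebra_simps)
qed (simp add: sum_prods_def suq_ideal.zero)

context suq
begin

definition unit_decomp :: "int \<Rightarrow> (falg \<times> falg) list \<Rightarrow> bool" where
  "unit_decomp l ps \<longleftrightarrow>
     (\<forall>(u, v)\<in>set ps. weight (- l) u \<and> weight l v) \<and> sum_prods ps - 1 \<in> suq_ideal q"

lemma unit_decomp_zero: "unit_decomp 0 [(1, 1)]"
  by (simp add: unit_decomp_def sum_prods_def weight_one suq_ideal.zero)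

lemma unit_decomp_one:
  "unit_decomp 1 [(gn Ga, gn Gas), (cst (complex_of_real q) * cst (complex_of_real q) * gn Gc, gn Gcs)]"
proof -
  have "gn Ga * gn Gas + cst (complex_of_real q) * cst (complex_of_real q) * gn Gc * gn Gcs - 1
          \<in> suq_ideal q"
    by (rule suq_ideal.rel) (simp add: suq_rels_def Let_def)
  then show ?thesis
    using weight_gn[of Ga] weight_gn[of Gas] weight_gn[of Gc] weight_gn[of Gcs]
    by (auto simp: unit_decomp_def sum_prods_def mult.assoc intro!: weight_cst_mult)
qed

lemma unit_decomp_minus_one: "unit_decomp (- 1) [(gn Gas, gn Ga), (gn Gcs, gn Gc)]"
proof -
  have "gn Gas * gn Ga + gn Gcs * gn Gc - 1 \<in> suq_ideal q"
    by (rule suq_ideal.rel) (simp add: suq_rels_def Let_def)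
  then show ?thesis
    using weight_gn[of Ga] weight_gn[of Gas] weight_gn[of Gc] weight_gn[of Gcs]
    by (auto simp: unit_decomp_def sum_prods_def)
qed

lemma unit_decomp_add:
  assumes ps: "unit_decomp l ps" and rs: "unit_decomp m rs"
  shows "unit_decomp (l + m) (concat (map (\<lambda>(u, v). map (\<lambda>(u', v'). (u * u', v' * v)) rs) ps))"
proof -
  have "weight (- (l + m)) (u * u') \<and> weight (l + m) (v' * v)"
    if "(u, v) \<in> set ps" "(u', v') \<in> set rs" for u v u' v'
  proof -
    have "weight (- l) u" "weight l v" "weight (- m) u'" "weight m v'"
      using that ps rs by (auto simp: unit_decomp_def)
    then show ?thesis
      using weight_mult[of "- l" u "- m" u'] weight_mult[of m v' l v] by (simp add: add.commute)
  qed
  moreover have "sum_list (map (\<lambda>(u, v). u * sum_prods rs * v) ps) - 1 \<in> suq_ideal q"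
    using suq_ideal_trans[OF sum_prods_suq_ideal_cong] ps rs by (auto simp: unit_decomp_def)
  ultimately show ?thesis by (auto simp: unit_decomp_def sum_prods_concat)
qed

lemma unit_decomp_exists: "\<exists>ps. unit_decomp l ps"
proof (induction l rule: int_induct[where k = 0])
  case base then show ?case using unit_decomp_zero by blast
next
  case (step1 i)
  then obtain ps where "unit_decomp i ps" by blast
  from unit_decomp_add[OF this unit_decomp_one] show ?case by blast
next
  case (step2 i)
  then obtain ps where "unit_decomp i ps" by blast
  from unit_decomp_add[OF this unit_decomp_minus_one] show ?case
    unfolding diff_conv_add_uminus by blast
qed

lemma weight_sum_prods:
  assumes "\<And>u v. (u, v) \<in> set ps \<Longrightarrow> weight (- l) u \<and> weight l v"
  shows "weight 0 (sum_prods ps)"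
proof -
  have "weight 0 (u * v)" if "(u, v) \<in> set ps" for u v
    using weight_mult[of "- l" u l v] assms[OF that] by simp
  then show ?thesis unfolding sum_prods_def by (auto intro!: weight_sum_list)
qed

end

lemma zeroA_addA: "addA q (zeroA q) (zeroA q) = zeroA q"
  by (simp add: zeroA_def)
lemma mulA_zeroA: "b \<in> Asu q \<Longrightarrow> mulA q b (zeroA q) = zeroA q"
  by (auto simp: zeroA_def Asu_def)
lemma zeroA_mulA: "b \<in> Asu q \<Longrightarrow> mulA q (zeroA q) b = zeroA q"
  by (auto simp: zeroA_def Asu_def)
lemma zeroA_Asu: "zeroA q \<in> Asu q"
  by (simp add: zeroA_def Asu_def)

lemma Ln_Asu: "X \<in> Ln q k \<Longrightarrow> X \<in> Asu q"
  by (simp add: Ln_def)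
lemma CP1_Ln0: "b \<in> CP1 q \<Longrightarrow> b \<in> Ln q 0"
  by (simp add: CP1_def)

lemma CP1_Asu: "b \<in> CP1 q \<Longrightarrow> b \<in> Asu q"
  by (simp add: CP1_def Ln_def)

context suq
begin

lemma mulA_CP1_Ln: "b \<in> CP1 q \<Longrightarrow> X \<in> Ln q k \<Longrightarrow> mulA q b X \<in> Ln q k"
  using mulA_Ln[of b 0 X k] by (simp add: CP1_def)
lemma mulA_Ln_CP1: "X \<in> Ln q k \<Longrightarrow> b \<in> CP1 q \<Longrightarrow> mulA q X b \<in> Ln q k"
  using mulA_Ln[of X k b 0] by (simp add: CP1_def)

lemma bimod_laws_Lmod: "bimod_laws (CP1 q) (Lmod q k)"
  by (auto simp: bimod_laws_def bimod_closed_def Lmod_def addA_Ln mulA_CP1_Ln mulA_Ln_CP1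
      mulA_addA_distrib_left mulA_addA_distrib_right mulA_assoc CP1_Asu Ln_Asu)

lemma Om01_iso_Lmod: "bimod_iso (CP1 q) (Om01 q) (Lmod q (- 2)) (\<lambda>u. fst (snd u))"
proof -
  have "bij_betw (\<lambda>u. fst (snd u)) (carr (Om01 q)) (Ln q (- 2))"
    unfolding bij_betw_def inj_on_def by (auto simp: Om01_def image_def)
  then show ?thesis
    using q_pos by (auto simp: bimod_iso_def Om01_def Lmod_def om_add_def om_lact_def
        om_ract_hom_def smulA_one mulA_Asu CP1_Asu Ln_Asu)
qed

lemma bimod_closed_Om01: "bimod_closed (CP1 q) (Om01 q)"
  using q_pos
  by (auto simp: bimod_closed_def Om01_def om_add_def om_lact_def om_ract_hom_def zeroA_addA
      addA_Ln mulA_zeroA zeroA_mulA mulA_CP1_Ln mulA_Ln_CP1 smulA_one mulA_Asu CP1_Asu Ln_Asu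
      zeroA_Asu)

lemma Om10_iso_Lmod: "bimod_iso (CP1 q) (Om10 q) (Lmod q 2) fst"
proof -
  have "bij_betw fst (carr (Om10 q)) (Ln q 2)"
    unfolding bij_betw_def inj_on_def by (auto simp: Om10_def image_def)
  then show ?thesis
    using q_pos by (auto simp: bimod_iso_def Om10_def Lmod_def om_add_def om_lact_def
        om_ract_hom_def smulA_one mulA_Asu CP1_Asu Ln_Asu)
qed

lemma bimod_closed_Om10: "bimod_closed (CP1 q) (Om10 q)"
  using q_pos
  by (auto simp: bimod_closed_def Om10_def om_add_def om_lact_def om_ract_hom_def zeroA_addA
      addA_Ln mulA_zeroA zeroA_mulA mulA_CP1_Ln mulA_Ln_CP1 smulA_one mulA_Asu CP1_Asu Ln_Asu
      zeroA_Asu)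

end

subsection \<open>The multiplication isomorphism \<open>\<L>\<^sub>k \<otimes> \<L>\<^sub>l \<cong> \<L>\<^sub>k\<^sub>+\<^sub>l\<close>\<close>

locale mult_iso = suq +
  fixes M :: "('m, aelt) bimod" and N :: "('n, aelt) bimod"
    and eM :: "'m \<Rightarrow> aelt" and eN :: "'n \<Rightarrow> aelt" and k l :: int
  assumes iso_M: "bimod_iso (CP1 q) M (Lmod q k) eM"
    and iso_N: "bimod_iso (CP1 q) N (Lmod q l) eN"
    and closed_M: "bimod_closed (CP1 q) M"
    and closed_N: "bimod_closed (CP1 q) N"
begin

abbreviation "MN \<equiv> tensor (CP1 q) M N"
abbreviation "tc \<equiv> tcls (CP1 q) M N"

lemma laws_M: "bimod_laws (CP1 q) M"
  by (rule bimod_laws_iso[OF iso_M closed_M bimod_laws_Lmod])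
lemma laws_N: "bimod_laws (CP1 q) N"
  by (rule bimod_laws_iso[OF iso_N closed_N bimod_laws_Lmod])

lemma eM_in: "m \<in> carr M \<Longrightarrow> eM m \<in> Ln q k"
  using bij_betw_apply[OF bimod_isoD(1)[OF iso_M]] by (simp add: Lmod_def)
lemma eN_in: "n \<in> carr N \<Longrightarrow> eN n \<in> Ln q l"
  using bij_betw_apply[OF bimod_isoD(1)[OF iso_N]] by (simp add: Lmod_def)

lemmas eM_badd = bimod_isoD(2)[OF iso_M, unfolded Lmod_def bimod.simps]
lemmas eM_lact = bimod_isoD(3)[OF iso_M, unfolded Lmod_def bimod.simps]
lemmas eM_ract = bimod_isoD(4)[OF iso_M, unfolded Lmod_def bimod.simps]
lemmas eN_badd = bimod_isoD(2)[OF iso_N, unfolded Lmod_def bimod.simps]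
lemmas eN_lact = bimod_isoD(3)[OF iso_N, unfolded Lmod_def bimod.simps]
lemmas eN_ract = bimod_isoD(4)[OF iso_N, unfolded Lmod_def bimod.simps]

definition eMi :: "aelt \<Rightarrow> 'm" where "eMi = inv_into (carr M) eM"
definition eNi :: "aelt \<Rightarrow> 'n" where "eNi = inv_into (carr N) eN"

lemma eMi_in: "X \<in> Ln q k \<Longrightarrow> eMi X \<in> carr M"
  and eM_eMi: "X \<in> Ln q k \<Longrightarrow> eM (eMi X) = X"
  and eMi_eqI: "m \<in> carr M \<Longrightarrow> eM m = X \<Longrightarrow> eMi X = m"
  using bimod_isoD(1)[OF iso_M]
  by (auto simp: eMi_def bij_betw_def Lmod_def inv_into_into f_inv_into_f)

lemma eNi_in: "X \<in> Ln q l \<Longrightarrow> eNi X \<in> carr N"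
  and eN_eNi: "X \<in> Ln q l \<Longrightarrow> eN (eNi X) = X"
  and eNi_eqI: "n \<in> carr N \<Longrightarrow> eN n = X \<Longrightarrow> eNi X = n"
  using bimod_isoD(1)[OF iso_N]
  by (auto simp: eNi_def bij_betw_def Lmod_def inv_into_into f_inv_into_f)

lemma rep_eM_badd:
  "m \<in> carr M \<Longrightarrow> m' \<in> carr M \<Longrightarrow>
     rep q (eM (badd M m m')) - (rep q (eM m) + rep q (eM m')) \<in> suq_ideal q"
  using rep_addA_diff[OF eM_in eM_in] by (simp add: eM_badd)
lemma rep_eN_badd:
  "n \<in> carr N \<Longrightarrow> n' \<in> carr N \<Longrightarrow>
     rep q (eN (badd N n n')) - (rep q (eN n) + rep q (eN n')) \<in> suq_ideal q"
  using rep_addA_diff[OF eN_in eN_in] by (simp add: eN_badd)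
lemma rep_eM_lact:
  "b \<in> CP1 q \<Longrightarrow> m \<in> carr M \<Longrightarrow> rep q (eM (lact M b m)) - rep q b * rep q (eM m) \<in> suq_ideal q"
  using rep_mulA_diff[OF CP1_Ln0 eM_in] by (simp add: eM_lact)
lemma rep_eM_ract:
  "b \<in> CP1 q \<Longrightarrow> m \<in> carr M \<Longrightarrow> rep q (eM (ract M m b)) - rep q (eM m) * rep q b \<in> suq_ideal q"
  using rep_mulA_diff[OF eM_in CP1_Ln0] by (simp add: eM_ract)
lemma rep_eN_lact:
  "b \<in> CP1 q \<Longrightarrow> n \<in> carr N \<Longrightarrow> rep q (eN (lact N b n)) - rep q b * rep q (eN n) \<in> suq_ideal q"
  using rep_mulA_diff[OF CP1_Ln0 eN_in] by (simp add: eN_lact)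
lemma rep_eN_ract:
  "b \<in> CP1 q \<Longrightarrow> n \<in> carr N \<Longrightarrow> rep q (eN (ract N n b)) - rep q (eN n) * rep q b \<in> suq_ideal q"
  using rep_mulA_diff[OF eN_in CP1_Ln0] by (simp add: eN_ract)

definition pair_prod :: "'m \<times> 'n \<Rightarrow> falg" where
  "pair_prod p = rep q (eM (fst p)) * rep q (eN (snd p))"

lemma weight_pair_prod: "p \<in> carr M \<times> carr N \<Longrightarrow> weight (k + l) (pair_prod p)"
  using weight_mult[OF rep_in_Ln(2)[OF eM_in] rep_in_Ln(2)[OF eN_in]] by (auto simp: pair_prod_def)

lemma weight_lin_ext_pair_prod: "x \<in> tfree M N \<Longrightarrow> weight (k + l) (lin_ext pair_prod x)"
  unfolding lin_ext_def tfree_def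
  by (intro weight_sum weight_of_int_mult weight_pair_prod) auto

lemma lin_ext_pair_prod_trel: "x \<in> trel (CP1 q) M N \<Longrightarrow> lin_ext pair_prod x \<in> suq_ideal q"
proof (induction rule: trel.induct)
  case (addl m m' n)
  from suq_ideal_mult_right[OF rep_eM_badd[OF addl(1,2)], of "rep q (eN n)"]
  show ?case by (simp add: lin_ext_diff lin_ext_add pair_prod_def algebra_simps)
next
  case (addr m n n')
  from suq_ideal_mult_left[OF rep_eN_badd[OF addr(2,3)], of "rep q (eM m)"]
  show ?case by (simp add: lin_ext_diff lin_ext_add pair_prod_def algebra_simps)
next
  case (bal m b n)
  have "(rep q (eM (ract M m b)) - rep q (eM m) * rep q b) * rep q (eN n)
      - rep q (eM m) * (rep q (eN (lact N b n)) - rep q b * rep q (eN n)) \<in> suq_ideal q"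
    using bal by (intro suq_ideal_diff suq_ideal_mult_right suq_ideal_mult_left rep_eM_ract rep_eN_lact)
  then show ?case by (simp add: lin_ext_diff lin_ext_add pair_prod_def algebra_simps)
qed (simp_all add: lin_ext_add lin_ext_uminus suq_ideal.zero suq_ideal.add suq_ideal_uminus)

definition tensor_mult :: "('m \<times> 'n \<Rightarrow>\<^sub>0 int) set \<Rightarrow> aelt" where
  "tensor_mult X = cls q (lin_ext pair_prod (SOME x. x \<in> X))"

lemma tensor_mult_tcls: "x \<in> tfree M N \<Longrightarrow> tensor_mult (tc x) = cls q (lin_ext pair_prod x)"
proof -
  assume "x \<in> tfree M N"
  then have "(SOME y. y \<in> tc x) \<in> tc x" by (meson someI tcls_self)
  then have "(SOME y. y \<in> tc x) - x \<in> trel (CP1 q) M N" by (simp add: tcls_def)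
  then show ?thesis by (simp add: tensor_mult_def cls_eq_iff lin_ext_pair_prod_trel flip: lin_ext_diff)
qed

lemma tensor_mult_lact:
  assumes b: "b \<in> CP1 q" and x: "x \<in> tfree M N"
  shows "tensor_mult (lact MN b (tc x)) = mulA q b (tensor_mult (tc x))"
proof -
  have "lin_ext (\<lambda>p. pair_prod (case p of (m, n) \<Rightarrow> (lact M b m, n))) x
          - lin_ext (\<lambda>p. rep q b * pair_prod p) x \<in> suq_ideal q"
    unfolding lin_ext_diff_fun
  proof (rule lin_ext_suq_ideal)
    fix p assume "p \<in> Poly_Mapping.keys x"
    then obtain m n where p: "p = (m, n)" "m \<in> carr M" using x by (auto simp: tfree_def)
    from suq_ideal_mult_right[OF rep_eM_lact[OF b p(2)], of "rep q (eN n)"]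
    show "pair_prod (case p of (m, n) \<Rightarrow> (lact M b m, n)) - rep q b * pair_prod p \<in> suq_ideal q"
      by (simp add: p pair_prod_def algebra_simps)
  qed
  moreover have "mulA q b (cls q (lin_ext pair_prod x)) = cls q (rep q b * lin_ext pair_prod x)"
    using rep_in_Ln(1)[OF CP1_Ln0[OF b]] by (metis mulA_cls)
  ultimately show ?thesis
    by (simp add: lact_tensor[OF laws_M b x] tensor_mult_tcls x push_lact_tfree[OF closed_M b x]
        lin_ext_push comp_def cls_eq_iff mult_lin_ext)
qed

lemma tensor_mult_ract:
  assumes b: "b \<in> CP1 q" and x: "x \<in> tfree M N"
  shows "tensor_mult (ract MN (tc x) b) = mulA q (tensor_mult (tc x)) b"
proof -
  have "lin_ext (\<lambda>p. pair_prod (case p of (m, n) \<Rightarrow> (m, ract N n b))) x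
          - lin_ext (\<lambda>p. pair_prod p * rep q b) x \<in> suq_ideal q"
    unfolding lin_ext_diff_fun
  proof (rule lin_ext_suq_ideal)
    fix p assume "p \<in> Poly_Mapping.keys x"
    then obtain m n where p: "p = (m, n)" "n \<in> carr N" using x by (auto simp: tfree_def)
    from suq_ideal_mult_left[OF rep_eN_ract[OF b p(2)], of "rep q (eM m)"]
    show "pair_prod (case p of (m, n) \<Rightarrow> (m, ract N n b)) - pair_prod p * rep q b \<in> suq_ideal q"
      by (simp add: p pair_prod_def algebra_simps)
  qed
  moreover have "mulA q (cls q (lin_ext pair_prod x)) b = cls q (lin_ext pair_prod x * rep q b)"
    using rep_in_Ln(1)[OF CP1_Ln0[OF b]] by (metis mulA_cls)
  ultimately show ?thesis
    by (simp add: ract_tensor[OF laws_N b x] tensor_mult_tcls x push_ract_tfree[OF closed_N b x]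
        lin_ext_push comp_def cls_eq_iff lin_ext_mult)
qed

end

context mult_iso
begin

definition decomp :: "(falg \<times> falg) list" where
  "decomp = (SOME ps. unit_decomp l ps)"

lemma unit_decomp_decomp: "unit_decomp l decomp"
  unfolding decomp_def using unit_decomp_exists by (rule someI_ex)

lemma weight_decomp: "(u, v) \<in> set decomp \<Longrightarrow> weight (- l) u" "(u, v) \<in> set decomp \<Longrightarrow> weight l v"
  using unit_decomp_decomp by (auto simp: unit_decomp_def)

lemma mult_sum_prods_decomp: "z * sum_prods decomp - z \<in> suq_ideal q"
  using suq_ideal_mult_left[of "sum_prods decomp - 1" q z] unit_decomp_decomp
  by (simp add: unit_decomp_def right_diff_distrib)

lemma weight_mult_decomp: "weight (k + l) z \<Longrightarrow> (u, v) \<in> set decomp \<Longrightarrow> weight k (z * u)"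
  using weight_mult[OF _ weight_decomp(1), of "k + l" z u v] by simp

definition split_tensor :: "falg \<Rightarrow> ('m \<times> 'n \<Rightarrow>\<^sub>0 int)" where
  "split_tensor z = sum_list (map (\<lambda>(u, v). frag_of (eMi (cls q (z * u)), eNi (cls q v))) decomp)"

lemma split_tensor_tfree:
  assumes z: "weight (k + l) z"
  shows "split_tensor z \<in> tfree M N"
proof -
  have "Poly_Mapping.keys (frag_of (eMi (cls q (z * u)), eNi (cls q v))) \<subseteq> carr M \<times> carr N"
    if "(u, v) \<in> set decomp" for u v
    using that z by (simp add: keys_frag_of eMi_in eNi_in cls_in_Ln_iff weight_mult_decomp weight_decomp)
  then show ?thesis
    using keys_sum_list[of "\<lambda>(u, v). frag_of (eMi (cls q (z * u)), eNi (cls q v))" decomp]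
    by (fastforce simp: split_tensor_def tfree_def)
qed

lemma lin_ext_pair_prod_split_tensor:
  assumes z: "weight (k + l) z"
  shows "lin_ext pair_prod (split_tensor z) - z \<in> suq_ideal q"
proof -
  have "pair_prod (eMi (cls q (z * u)), eNi (cls q v)) - z * u * v \<in> suq_ideal q"
    if "(u, v) \<in> set decomp" for u v
  proof -
    have zu: "cls q (z * u) \<in> Ln q k" and v: "cls q v \<in> Ln q l"
      using that z by (simp_all add: cls_in_Ln_iff weight_mult_decomp weight_decomp)
    have "(rep q (cls q (z * u)) - z * u) * rep q (cls q v) + z * u * (rep q (cls q v) - v)
            \<in> suq_ideal q"
      using rep_diff_suq_ideal[OF zu refl] rep_diff_suq_ideal[OF v refl]
      by (intro suq_ideal.add suq_ideal_mult_right suq_ideal_mult_left)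
    then show ?thesis using zu v by (simp add: pair_prod_def eM_eMi eN_eNi algebra_simps)
  qed
  then have "lin_ext pair_prod (split_tensor z) - sum_list (map (\<lambda>(u, v). z * u * v) decomp)
               \<in> suq_ideal q"
    unfolding split_tensor_def lin_ext_sum_list sum_list_subtractf[symmetric]
    by (intro suq_ideal_sum_list) auto
  then show ?thesis
    using mult_sum_prods_decomp by (simp add: sum_list_mult_sum_prods suq_ideal_trans)
qed

lemma frag_of_eMi_zero_trel:
  assumes "n \<in> carr N"
  shows "frag_of (eMi (cls q 0), n) \<in> trel (CP1 q) M N"
proof -
  let ?m = "eMi (cls q 0)"
  have m: "?m \<in> carr M" "eM ?m = cls q 0"
    by (simp_all add: eMi_in eM_eMi cls_in_Ln_iff weight_zero)
  then have "badd M ?m ?m = ?m"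
    by (intro eMi_eqI[symmetric] bimod_closedD(1)[OF closed_M]) (simp_all add: eM_badd)
  then show ?thesis by (rule frag_of_trel_idem_left[OF m(1) _ assms])
qed

lemma frag_of_eNi_zero_trel:
  assumes "m \<in> carr M"
  shows "frag_of (m, eNi (cls q 0)) \<in> trel (CP1 q) M N"
proof -
  let ?n = "eNi (cls q 0)"
  have n: "?n \<in> carr N" "eN ?n = cls q 0"
    by (simp_all add: eNi_in eN_eNi cls_in_Ln_iff weight_zero)
  then have "badd N ?n ?n = ?n"
    by (intro eNi_eqI[symmetric] bimod_closedD(1)[OF closed_N]) (simp_all add: eN_badd)
  then show ?thesis by (rule frag_of_trel_idem_right[OF assms n(1)])
qed

lemma split_tensor_suq_ideal:
  assumes "z \<in> suq_ideal q"
  shows "split_tensor z \<in> trel (CP1 q) M N"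
  unfolding split_tensor_def
proof (rule trel_sum_list, clarify)
  fix u v assume "(u, v) \<in> set decomp"
  moreover have "cls q (z * u) = cls q 0"
    using suq_ideal_mult_right[OF assms] by (simp add: cls_eq_iff)
  ultimately show "frag_of (eMi (cls q (z * u)), eNi (cls q v)) \<in> trel (CP1 q) M N"
    by (simp add: frag_of_eMi_zero_trel eNi_in cls_in_Ln_iff weight_decomp)
qed

lemma split_tensor_diff:
  assumes z: "weight (k + l) z" and z': "weight (k + l) z'"
  shows "split_tensor (z - z') - split_tensor z + split_tensor z' \<in> trel (CP1 q) M N"
proof -
  have "frag_of (eMi (cls q ((z - z') * u)), eNi (cls q v)) - frag_of (eMi (cls q (z * u)), eNi (cls q v))
          + frag_of (eMi (cls q (z' * u)), eNi (cls q v)) \<in> trel (CP1 q) M N"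
    if uv: "(u, v) \<in> set decomp" for u v
  proof -
    have wz: "weight k (z * u)" and wz': "weight k (z' * u)"
      using weight_mult_decomp[OF z uv] weight_mult_decomp[OF z' uv] .
    let ?d = "eMi (cls q ((z - z') * u))" and ?e = "eMi (cls q (z' * u))" and ?n = "eNi (cls q v)"
    have d: "?d \<in> carr M" and e: "?e \<in> carr M" and n: "?n \<in> carr N"
      using wz wz' weight_diff[OF wz wz'] weight_decomp(2)[OF uv]
      by (simp_all add: eMi_in eNi_in cls_in_Ln_iff left_diff_distrib)
    have "badd M ?d ?e = eMi (cls q (z * u))"
      using d e wz wz' weight_diff[OF wz wz']
      by (intro eMi_eqI[symmetric] bimod_closedD(1)[OF closed_M])
         (simp_all add: eM_badd eM_eMi cls_in_Ln_iff left_diff_distrib)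
    then show ?thesis
      using trel.neg[OF trel.addl[OF d e n, of "CP1 q"]] by (simp add: algebra_simps)
  qed
  then show ?thesis
    unfolding split_tensor_def sum_list_subtractf[symmetric] sum_list_addf[symmetric]
    by (intro trel_sum_list) auto
qed

lemma sum_frag_of_right_trel:
  assumes m: "m \<in> carr M" and y: "weight l y"
    and xs: "\<And>u v. (u, v) \<in> set xs \<Longrightarrow> weight (- l) u \<and> weight l v"
  shows "sum_list (map (\<lambda>(u, v). frag_of (m, eNi (cls q (y * u * v)))) xs)
           - frag_of (m, eNi (cls q (y * sum_prods xs))) \<in> trel (CP1 q) M N"
  using xs
proof (induction xs)
  case Nil
  then show ?case using trel.neg[OF frag_of_eNi_zero_trel[OF m]] by (simp add: sum_prods_def)
next
  case (Cons p xs)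
  obtain u v where p: "p = (u, v)" by (cases p)
  have "weight (- l) u" "weight l v" using Cons.prems p by auto
  then have h1: "weight l (y * u * v)" using weight_mult[OF weight_mult[OF y]] by fastforce
  have "weight 0 (sum_prods xs)"
    using Cons.prems by (intro weight_sum_prods[of xs l]) auto
  then have h2: "weight l (y * sum_prods xs)" using weight_mult[OF y] by fastforce
  let ?n1 = "eNi (cls q (y * u * v))" and ?n2 = "eNi (cls q (y * sum_prods xs))"
  have n1: "?n1 \<in> carr N" and n2: "?n2 \<in> carr N" using h1 h2 by (simp_all add: eNi_in cls_in_Ln_iff)
  have "badd N ?n1 ?n2 = eNi (cls q (y * sum_prods (p # xs)))"
    using n1 n2 h1 h2
    by (intro eNi_eqI[symmetric] bimod_closedD(1)[OF closed_N])
       (simp_all add: eN_badd eN_eNi cls_in_Ln_iff p algebra_simps)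
  then have "frag_of (m, eNi (cls q (y * sum_prods (p # xs)))) - frag_of (m, ?n1) - frag_of (m, ?n2)
               \<in> trel (CP1 q) M N"
    using trel.addr[OF m n1 n2, of "CP1 q"] by simp
  from trel_diff[OF Cons.IH[OF Cons.prems] this] show ?case
    using Cons.prems by (simp add: p algebra_simps)
qed

lemma frag_of_decomp_balance:
  assumes m: "m \<in> carr M" and y: "weight l y" and uv: "(u, v) \<in> set decomp"
  shows "frag_of (eMi (cls q (rep q (eM m) * y * u)), eNi (cls q v))
           - frag_of (m, eNi (cls q (y * u * v))) \<in> trel (CP1 q) M N"
proof -
  let ?b = "cls q (y * u)" and ?v = "eNi (cls q v)"
  have b: "?b \<in> CP1 q"
    using weight_mult[OF y weight_decomp(1)[OF uv]] by (simp add: CP1_def cls_in_Ln_iff)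
  have v: "?v \<in> carr N" and wv: "weight l v"
    using weight_decomp(2)[OF uv] by (simp_all add: eNi_in cls_in_Ln_iff)
  have "mulA q (eM m) ?b = cls q (rep q (eM m) * y * u)"
    by (metis rep_in_Ln(1)[OF eM_in[OF m]] mulA_cls mult.assoc)
  then have "eMi (cls q (rep q (eM m) * y * u)) = ract M m ?b"
    using b m by (intro eMi_eqI bimod_closedD(3)[OF closed_M]) (simp_all add: eM_ract)
  moreover have "lact N ?b ?v = eNi (cls q (y * u * v))"
    using b v wv by (intro eNi_eqI[symmetric] bimod_closedD(2)[OF closed_N])
      (simp_all add: eN_lact eN_eNi cls_in_Ln_iff)
  ultimately show ?thesis using trel.bal[OF m b v] by simp
qed

lemma split_tensor_pair_prod:
  assumes "p \<in> carr M \<times> carr N"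
  shows "split_tensor (pair_prod p) - frag_of p \<in> trel (CP1 q) M N"
proof -
  obtain m n where p: "p = (m, n)" and m: "m \<in> carr M" and n: "n \<in> carr N" using assms by auto
  let ?y = "rep q (eN n)"
  have cy: "cls q ?y = eN n" and wy: "weight l ?y"
    using rep_in_Ln[OF eN_in[OF n]] by auto
  let ?S = "sum_list (map (\<lambda>(u, v). frag_of (m, eNi (cls q (?y * u * v)))) decomp)"
  have "split_tensor (pair_prod p) - ?S \<in> trel (CP1 q) M N"
    unfolding split_tensor_def sum_list_subtractf[symmetric]
    using frag_of_decomp_balance[OF m wy] by (intro trel_sum_list) (auto simp: p pair_prod_def)
  moreover have "?S - frag_of (m, eNi (cls q (?y * sum_prods decomp))) \<in> trel (CP1 q) M N"
    using weight_decomp by (intro sum_frag_of_right_trel[OF m wy]) auto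
  moreover have "cls q (?y * sum_prods decomp) = eN n"
    using mult_sum_prods_decomp[of ?y] cy by (metis cls_eq_iff)
  ultimately show ?thesis
    using trel.add by (fastforce simp: p eNi_eqI[OF n])
qed

lemma split_tensor_lin_ext_pair_prod:
  assumes "x \<in> tfree M N"
  shows "split_tensor (lin_ext pair_prod x) - x \<in> trel (CP1 q) M N"
proof -
  have "x \<in> tfree M N \<and> split_tensor (lin_ext pair_prod x) - x \<in> trel (CP1 q) M N"
    using assms unfolding tfree_def mem_Collect_eq
  proof (induction x rule: frag_induction)
    case zero
    then show ?case by (simp add: split_tensor_suq_ideal suq_ideal.zero tfree_def)
  next
    case (one p)
    then show ?case by (simp add: split_tensor_pair_prod tfree_def keys_frag_of)
  next
    case (diff a b)
    have t1: "split_tensor (lin_ext pair_prod (a - b)) - split_tensor (lin_ext pair_prod a)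
            + split_tensor (lin_ext pair_prod b) \<in> trel (CP1 q) M N"
      using diff unfolding lin_ext_diff
      by (intro split_tensor_diff weight_lin_ext_pair_prod) (simp_all add: tfree_def)
    have t2: "(split_tensor (lin_ext pair_prod a) - a) - (split_tensor (lin_ext pair_prod b) - b)
                \<in> trel (CP1 q) M N"
      using diff trel_diff by blast
    from trel.add[OF t1 t2]
    have "split_tensor (lin_ext pair_prod (a - b)) - (a - b) \<in> trel (CP1 q) M N"
      by (simp add: algebra_simps)
    then show ?case using diff keys_diff[of a b] by auto
  qed
  then show ?thesis by blast
qed

lemma tensor_mult_inj:
  assumes x: "x \<in> tfree M N" and y: "y \<in> tfree M N"
    and eq: "cls q (lin_ext pair_prod x) = cls q (lin_ext pair_prod y)"
  shows "tc x = tc y"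
proof -
  have "split_tensor (lin_ext pair_prod (x - y)) \<in> trel (CP1 q) M N"
    using eq by (intro split_tensor_suq_ideal) (simp add: cls_eq_iff lin_ext_diff)
  from trel_diff[OF this split_tensor_lin_ext_pair_prod[OF tfree_diff[OF x y]]]
  show ?thesis by (intro tcls_eqI) simp
qed

lemma tensor_mult_surj:
  assumes "Z \<in> Ln q (k + l)"
  shows "Z \<in> tensor_mult ` carr MN"
proof -
  let ?x = "split_tensor (rep q Z)"
  have w: "weight (k + l) (rep q Z)" and c: "cls q (rep q Z) = Z"
    using rep_in_Ln[OF assms] by auto
  have x: "?x \<in> tfree M N" by (rule split_tensor_tfree[OF w])
  have "cls q (lin_ext pair_prod ?x) = cls q (rep q Z)"
    using lin_ext_pair_prod_split_tensor[OF w] by (simp add: cls_eq_iff)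
  then have "tensor_mult (tc ?x) = Z" by (simp add: tensor_mult_tcls[OF x] c)
  then show ?thesis using x by (metis carr_tensor imageI)
qed

theorem tensor_mult_bimod_iso: "bimod_iso (CP1 q) MN (Lmod q (k + l)) tensor_mult"
  unfolding bimod_iso_def bij_betw_def
proof (intro conjI ballI)
  show "inj_on tensor_mult (carr MN)"
  proof (rule inj_onI)
    fix X Y assume "X \<in> carr MN" "Y \<in> carr MN" "tensor_mult X = tensor_mult Y"
    then obtain x y where "x \<in> tfree M N" "y \<in> tfree M N" "X = tc x" "Y = tc y"
      "cls q (lin_ext pair_prod x) = cls q (lin_ext pair_prod y)"
      by (auto simp: carr_tensor tensor_mult_tcls)
    then show "X = Y" using tensor_mult_inj by blast
  qed
  show "tensor_mult ` carr MN = carr (Lmod q (k + l))"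
    using tensor_mult_surj
    by (auto simp: carr_tensor Lmod_def tensor_mult_tcls cls_in_Ln_iff weight_lin_ext_pair_prod)
next
  fix X Y assume "X \<in> carr MN" "Y \<in> carr MN"
  then show "tensor_mult (badd MN X Y) = badd (Lmod q (k + l)) (tensor_mult X) (tensor_mult Y)"
    by (auto simp: carr_tensor badd_tensor tensor_mult_tcls tfree_add Lmod_def lin_ext_add)
next
  fix b X assume "b \<in> CP1 q" "X \<in> carr MN"
  then show "tensor_mult (lact MN b X) = lact (Lmod q (k + l)) b (tensor_mult X)"
    by (auto simp: carr_tensor Lmod_def tensor_mult_lact)
next
  fix b X assume "b \<in> CP1 q" "X \<in> carr MN"
  then show "tensor_mult (ract MN X b) = ract (Lmod q (k + l)) (tensor_mult X) b"
    by (auto simp: carr_tensor Lmod_def tensor_mult_ract)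
qed

end

context suq
begin

lemma tensor_Lmod_swap_iso:
  assumes iso: "bimod_iso (CP1 q) A (Lmod q j) e" and closed: "bimod_closed (CP1 q) A"
  shows "\<exists>\<Phi>. bimod_iso (CP1 q) (tensor (CP1 q) (Lmod q n) A) (tensor (CP1 q) A (Lmod q n)) \<Phi>"
proof -
  have "bimod_iso (CP1 q) (Lmod q n) (Lmod q n) id" "bimod_closed (CP1 q) (Lmod q n)"
    using bimod_laws_Lmod by (simp_all add: bimod_iso_def bimod_laws_def)
  then interpret left: mult_iso q "Lmod q n" A id e n j
    + right: mult_iso q A "Lmod q n" e id j n
    using iso closed by unfold_locales
  have "bimod_iso (CP1 q) (Lmod q (n + j)) (tensor (CP1 q) A (Lmod q n))
          (inv_into (carr right.MN) right.tensor_mult)"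
    using bimod_iso_inv_into[OF right.tensor_mult_bimod_iso bimod_closed_tensor[OF right.laws_M right.laws_N]]
    by (simp add: add.commute)
  then show ?thesis using bimod_iso_comp[OF left.tensor_mult_bimod_iso] by blast
qed

end

theorem lemma3p6:
  fixes q :: real
  assumes "0 < q" and "q < 1"
  shows "\<forall>n::int.
    (\<exists>\<Phi>. bimod_iso (CP1 q) (tensor (CP1 q) (Lmod q n) (Om01 q))
                            (tensor (CP1 q) (Om01 q) (Lmod q n)) \<Phi>) \<and>
    (\<exists>\<Psi>. bimod_iso (CP1 q) (tensor (CP1 q) (Lmod q n) (Om10 q))
                            (tensor (CP1 q) (Om10 q) (Lmod q n)) \<Psi>)"
proof -
  interpret suq q by unfold_locales (rule assms(1))
  show ?thesis
    using tensor_Lmod_swap_iso[OF Om01_iso_Lmod bimod_closed_Om01]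
      tensor_Lmod_swap_iso[OF Om10_iso_Lmod bimod_closed_Om10] by blast
qed
end
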